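(* Let $k>0$ and assume $g$ satisfies (Hg) and (Hg2). Then there exists $\delta_a\in(0,1)$ such that for all $a\in(0,\delta_a)$: (i) $g''(a;a)>0$; (ii) $$0<\frac{g'(a;a)}{k+1}<\max_{A\in[a+\frac{2a}{k},1]}\frac{g(A;a)}{A}.$$
   Context: Derivatives $g',g''$ are with respect to the first argument. A function $g:\mathbb R\times[0,1]\to\mathbb R$, $(u,a)\mapsto g(u;a)$, satisfies (Hg) if it is $C^1$ and for every $a\in(0,1)$: $g(0;a)=g(a;a)=g(1;a)=0$, $g'(0;a)<0$, $g'(1;a)<0$, $g'(a;a)>0$, $g(v;a)>0$ for $v\in(-\infty,0)\cup(a,1)$ and $g(v;a)<0$ for $v\in(0,a)\cup(1,\infty)$. (Hg2): for each $a\in[0,1]$, $g(\cdot;a)\in C^2(\mathbb R)$; $g'(a;a)=0$ for $a\in\{0,1\}$; $g''(0;0)>0$, $g''(1;1)<0$; and there exist $a_0,a_1\in(0,1)$ such that for each $a\in(0,a_0)$ and each $a\in(a_1,1)$ there is a unique $v$ with $g''(v;a)=0$. *)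

theory Defs
  imports "HOL-Analysis.Analysis"
begin

text \<open>g :: real \<Rightarrow> real \<Rightarrow> real, written g u a for g(u;a).
  Derivatives are with respect to the first argument.\<close>

definition d1 :: "(real \<Rightarrow> real \<Rightarrow> real) \<Rightarrow> real \<Rightarrow> real \<Rightarrow> real" where
  "d1 g u a = deriv (\<lambda>v. g v a) u"

definition d2 :: "(real \<Rightarrow> real \<Rightarrow> real) \<Rightarrow> real \<Rightarrow> real \<Rightarrow> real" where
  "d2 g u a = deriv (\<lambda>v. d1 g v a) u"

definition C1_on_strip :: "(real \<Rightarrow> real \<Rightarrow> real) \<Rightarrow> bool" where
  "C1_on_strip g \<longleftrightarrow> (\<exists>gu ga :: real \<times> real \<Rightarrow> real.
     continuous_on (UNIV \<times> {0..1}) gu \<and> continuous_on (UNIV \<times> {0..1}) ga \<and>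
     (\<forall>p \<in> UNIV \<times> {0..1}.
        ((\<lambda>q. g (fst q) (snd q)) has_derivative (\<lambda>h. gu p * fst h + ga p * snd h))
          (at p within UNIV \<times> {0..1})))"

definition Hg :: "(real \<Rightarrow> real \<Rightarrow> real) \<Rightarrow> bool" where
  "Hg g \<longleftrightarrow> C1_on_strip g \<and>
    (\<forall>a \<in> {0<..<1}.
       g 0 a = 0 \<and> g a a = 0 \<and> g 1 a = 0 \<and>
       d1 g 0 a < 0 \<and> d1 g 1 a < 0 \<and> d1 g a a > 0 \<and>
       (\<forall>v. (v < 0 \<or> (a < v \<and> v < 1)) \<longrightarrow> g v a > 0) \<and>
       (\<forall>v. ((0 < v \<and> v < a) \<or> 1 < v) \<longrightarrow> g v a < 0))"

definition C2_real :: "(real \<Rightarrow> real) \<Rightarrow> bool" where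
  "C2_real f \<longleftrightarrow> (\<forall>x. f differentiable (at x)) \<and>
     (\<forall>x. deriv f differentiable (at x)) \<and> continuous_on UNIV (deriv (deriv f))"

definition Hg2 :: "(real \<Rightarrow> real \<Rightarrow> real) \<Rightarrow> bool" where
  "Hg2 g \<longleftrightarrow>
    (\<forall>a \<in> {0..1}. C2_real (\<lambda>v. g v a)) \<and>
    d1 g 0 0 = 0 \<and> d1 g 1 1 = 0 \<and>
    d2 g 0 0 > 0 \<and> d2 g 1 1 < 0 \<and>
    (\<exists>a0 \<in> {0<..<1}. \<exists>a1 \<in> {0<..<1}.
       (\<forall>a \<in> {0<..<a0}. \<exists>!v. d2 g v a = 0) \<and>
       (\<forall>a \<in> {a1<..<1}. \<exists>!v. d2 g v a = 0))"

end

theory Submission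
  imports Defs
begin

(*
  At a = 0 the nonlinearity is flat and convex at the origin: g(0;0) = g'(0;0) = 0 < g''(0;0),
  so there are 0 < u1 < u2 with g(u1;0) > 0 and g'(u1;0) < g'(u2;0). By joint continuity these
  inequalities survive for all small a, while g'(a;a) tends to g'(0;0) = 0.
  (i) For small a < u1, g'(.;a) increases somewhere on (0,a), decreases somewhere on (a,1) and
  increases again on (u1,u2). If g''(a;a) <= 0, the intermediate value theorem gives a zero of
  g''(.;a) at or left of a and another one right of a, contradicting the uniqueness of the
  inflection point in (Hg2).
  (ii) For small a, u1 lies in [a + 2a/k, 1] and g(u1;a)/u1 > g(u1;0)/(2 u1), a positive constant
  which eventually exceeds g'(a;a)/(k+1).
*)

lemma pos_if_at_most_one_zero:
  fixes h :: "real \<Rightarrow> real"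
  assumes cont: "continuous_on UNIV h"
    and one_zero: "\<And>y z. h y = 0 \<Longrightarrow> h z = 0 \<Longrightarrow> y = z"
    and "x1 < a" "a < x2" "a < x3" "h x1 > 0" "h x2 > 0" "h x3 < 0"
  shows "h a > 0"
proof (rule ccontr)
  assume "\<not> h a > 0"
  have isCont: "\<forall>x. isCont h x"
    using cont by (simp add: continuous_on_eq_continuous_at)
  obtain z1 where z1: "z1 \<le> a" "h z1 = 0"
    using IVT2[of h a 0 x1] \<open>\<not> h a > 0\<close> assms(3,6) isCont by auto
  obtain z2 where z2: "a < z2" "h z2 = 0"
  proof (cases "x2 \<le> x3")
    case True
    then obtain z where "x2 \<le> z" "h z = 0"
      using IVT2[of h x3 0 x2] assms(7,8) isCont by auto
    with \<open>a < x2\<close> show ?thesis by (intro that[of z]) simp_all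
  next
    case False
    then obtain z where "x3 \<le> z" "h z = 0"
      using IVT[of h x3 0 x2] assms(7,8) isCont by auto
    with \<open>a < x3\<close> show ?thesis by (intro that[of z]) simp_all
  qed
  show False using one_zero[OF z1(2) z2(2)] z1 z2 by simp
qed

lemma deriv_pos_if_rise_fall_rise:
  fixes f f' :: "real \<Rightarrow> real"
  assumes f: "\<And>x. (f has_real_derivative f' x) (at x)" and cont: "continuous_on UNIV f'"
    and one_zero: "\<And>y z. f' y = 0 \<Longrightarrow> f' z = 0 \<Longrightarrow> y = z"
    and "p < a" "f p < f a" "a < b" "f b < f a" "a < q" "q < r" "f q < f r"
  shows "f' a > 0"
proof -
  have slope_pos: "\<exists>x. s < x \<and> x < t \<and> f' x > 0" if "s < t" "f s < f t" for s t
  proof -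
    obtain x where "s < x" "x < t" "f t - f s = (t - s) * f' x"
      using MVT2[of s t f f'] f \<open>s < t\<close> by blast
    moreover have "0 < (t - s) * f' x" using calculation(3) \<open>f s < f t\<close> by simp
    ultimately show ?thesis using \<open>s < t\<close> zero_less_mult_pos by fastforce
  qed
  obtain x1 where x1: "x1 < a" "f' x1 > 0"
    using slope_pos[OF \<open>p < a\<close> \<open>f p < f a\<close>] by blast
  obtain x2 where "q < x2" "f' x2 > 0"
    using slope_pos[OF \<open>q < r\<close> \<open>f q < f r\<close>] by blast
  with \<open>a < q\<close> have x2: "a < x2" "f' x2 > 0" by simp_all
  obtain x3 where "a < x3" "x3 < b" "f b - f a = (b - a) * f' x3"
    using MVT2[of a b f f'] f \<open>a < b\<close> by blast
  moreover have "(b - a) * f' x3 < 0" using calculation(3) \<open>f b < f a\<close> by simp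
  ultimately have x3: "a < x3" "f' x3 < 0" using \<open>a < b\<close> by (simp_all add: mult_less_0_iff)
  show ?thesis
    using pos_if_at_most_one_zero[OF cont one_zero] x1 x2 x3 by blast
qed

lemma pos_and_strict_mono_deriv_near_flat_zero:
  fixes f f' f'' :: "real \<Rightarrow> real"
  assumes f: "\<And>x. (f has_real_derivative f' x) (at x)"
    and f': "\<And>x. (f' has_real_derivative f'' x) (at x)"
    and "continuous_on UNIV f''" "f 0 = 0" "f' 0 = 0" "f'' 0 > 0"
  obtains \<delta> where "\<delta> > 0"
    "\<And>u v. 0 \<le> u \<Longrightarrow> u < v \<Longrightarrow> v \<le> \<delta> \<Longrightarrow> f' u < f' v"
    "\<And>u. 0 < u \<Longrightarrow> u \<le> \<delta> \<Longrightarrow> f u > 0"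
proof -
  obtain d where d: "d > 0" "\<And>x. dist x 0 < d \<Longrightarrow> dist (f'' x) (f'' 0) < f'' 0"
    using assms(3,6) unfolding continuous_on_iff by blast
  define \<delta> where "\<delta> = d / 2"
  have "\<delta> > 0" using d by (simp add: \<delta>_def)
  have f''_pos: "f'' x > 0" if "0 \<le> x" "x \<le> \<delta>" for x
    using d(2)[of x] that \<open>d > 0\<close> by (auto simp: \<delta>_def dist_real_def)
  have f'_mono: "f' u < f' v" if "0 \<le> u" "u < v" "v \<le> \<delta>" for u v
  proof (rule DERIV_pos_imp_increasing[OF \<open>u < v\<close>])
    show "\<exists>y. (f' has_real_derivative y) (at x) \<and> y > 0" if "u \<le> x" "x \<le> v" for x
      using f' f''_pos[of x] that \<open>0 \<le> u\<close> \<open>v \<le> \<delta>\<close> by auto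
  qed
  have "f 0 < f u" if "0 < u" "u \<le> \<delta>" for u
  proof (rule DERIV_pos_imp_increasing_open[OF \<open>0 < u\<close>])
    show "\<exists>y. (f has_real_derivative y) (at x) \<and> y > 0" if "0 < x" "x < u" for x
      using f f'_mono[of 0 x] that \<open>u \<le> \<delta>\<close> \<open>f' 0 = 0\<close> by auto
    show "continuous_on {0..u} f"
      using f by (intro continuous_at_imp_continuous_on ballI DERIV_isCont) blast
  qed
  with \<open>\<delta> > 0\<close> f'_mono \<open>f 0 = 0\<close> show ?thesis
    using that by auto
qed

lemma less_SUP_if_continuous_on_compact:
  fixes h :: "'a::topological_space \<Rightarrow> real"
  assumes "compact S" "continuous_on S h" "x \<in> S" "y < h x"
  shows "y < (SUP x\<in>S. h x)"
proof -
  have "bdd_above (h ` S)"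
    using compact_continuous_image[OF assms(2,1)]
    by (intro bounded_imp_bdd_above compact_imp_bounded)
  with assms(3,4) show ?thesis
    by (subst less_cSUP_iff) auto
qed

lemma ex_Ioo_if_eventually_at_right_0:
  assumes "eventually P (at_right (0::real))"
  shows "\<exists>\<delta>\<in>{0<..<1}. \<forall>a\<in>{0<..<\<delta>}. P a"
proof -
  obtain b where "b > 0" "\<forall>a > 0. a < b \<longrightarrow> P a"
    using assms unfolding eventually_at_right_field by blast
  then show ?thesis
    by (intro bexI[of _ "min b (1/2)"]) auto
qed

lemma has_real_derivative_first_partial:
  fixes g :: "real \<Rightarrow> real \<Rightarrow> real"
  assumes "((\<lambda>q. g (fst q) (snd q)) has_derivative (\<lambda>h. gu * fst h + ga * snd h))
             (at (u, a) within S)"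
    and "range (\<lambda>v. (v, a)) \<subseteq> S"
  shows "((\<lambda>v. g v a) has_real_derivative gu) (at u)"
proof -
  have "((\<lambda>v. (v, a)) has_derivative (\<lambda>h. (h, 0))) (at u)"
    by (auto intro!: derivative_eq_intros)
  moreover have "((\<lambda>q. g (fst q) (snd q)) has_derivative (\<lambda>h. gu * fst h + ga * snd h))
                   (at ((\<lambda>v. (v, a)) u) within range (\<lambda>v. (v, a)))"
    using has_derivative_subset[OF assms] by simp
  ultimately have "((\<lambda>q. g (fst q) (snd q)) \<circ> (\<lambda>v. (v, a)) has_derivative
                     (\<lambda>h. gu * fst h + ga * snd h) \<circ> (\<lambda>h. (h, 0))) (at u)"
    using diff_chain_within by blast
  then show ?thesis
    by (simp add: o_def has_field_derivative_def)
qed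

lemma C1_on_strip_imp_continuous_on:
  assumes "C1_on_strip g"
  shows "continuous_on (UNIV \<times> {0..1}) (\<lambda>q. g (fst q) (snd q))"
  using assms has_derivative_continuous
  unfolding C1_on_strip_def continuous_on_eq_continuous_within by blast

lemma C1_on_strip_imp_continuous_on_d1:
  assumes "C1_on_strip g"
  shows "continuous_on (UNIV \<times> {0..1}) (\<lambda>q. d1 g (fst q) (snd q))"
proof -
  obtain gu ga :: "real \<times> real \<Rightarrow> real" where gu: "continuous_on (UNIV \<times> {0..1}) gu"
    and D: "\<forall>p \<in> UNIV \<times> {0..1}. ((\<lambda>q. g (fst q) (snd q)) has_derivative
              (\<lambda>h. gu p * fst h + ga p * snd h)) (at p within UNIV \<times> {0..1})"
    using assms unfolding C1_on_strip_def by blast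
  have "d1 g u a = gu (u, a)" if "a \<in> {0..1}" for u a
    unfolding d1_def
    by (rule DERIV_imp_deriv,
        rule has_real_derivative_first_partial[where ga="ga (u, a)" and S="UNIV \<times> {0..1}"])
      (use D that in auto)
  then show ?thesis
    by (intro continuous_on_eq[OF gu]) auto
qed

lemma tendsto_at_right_0_along_strip:
  fixes F :: "real \<times> real \<Rightarrow> real"
  assumes "continuous_on (UNIV \<times> {0..1}) F" "continuous_on {0..1} x"
  shows "((\<lambda>a. F (x a, a)) \<longlongrightarrow> F (x 0, 0)) (at_right 0)"
proof -
  have "continuous_on {0..1} (\<lambda>a. F (x a, a))"
    by (rule continuous_on_compose2[OF assms(1)]) (auto intro!: continuous_intros assms(2))
  then show ?thesis
    by (rule continuous_on_Icc_at_rightD) simp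
qed

lemma C2_real_has_derivatives:
  assumes "C2_real (\<lambda>v. g v a)"
  shows "\<And>x. ((\<lambda>v. g v a) has_real_derivative d1 g x a) (at x)"
    and "\<And>x. ((\<lambda>v. d1 g v a) has_real_derivative d2 g x a) (at x)"
    and "continuous_on UNIV (\<lambda>v. d2 g v a)"
proof -
  have d1_eq: "(\<lambda>v. d1 g v a) = deriv (\<lambda>v. g v a)"
    by (simp add: d1_def fun_eq_iff)
  show "((\<lambda>v. g v a) has_real_derivative d1 g x a) (at x)" for x
    using assms unfolding C2_real_def d1_def by (simp add: DERIV_deriv_iff_real_differentiable)
  show "((\<lambda>v. d1 g v a) has_real_derivative d2 g x a) (at x)" for x
    using assms unfolding C2_real_def d1_eq d2_def
    by (simp add: DERIV_deriv_iff_real_differentiable)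
  show "continuous_on UNIV (\<lambda>v. d2 g v a)"
    using assms unfolding C2_real_def d2_def d1_eq by simp
qed

lemma Hg_zero_at_origin:
  assumes "Hg g"
  shows "g 0 0 = 0"
proof -
  \<comment> \<open>(Hg) only speaks about a in (0,1); the value at a = 0 comes from continuity.\<close>
  have "((\<lambda>a. g 0 a) \<longlongrightarrow> g 0 0) (at_right 0)"
    using tendsto_at_right_0_along_strip[OF C1_on_strip_imp_continuous_on, of g "\<lambda>_. 0"] assms
    unfolding Hg_def by simp
  moreover have "eventually (\<lambda>a. g 0 a = 0) (at_right 0)"
    using assms unfolding Hg_def eventually_at_right_field by (intro exI[of _ 1]) auto
  then have "((\<lambda>a. g 0 a) \<longlongrightarrow> 0) (at_right 0)"
    by (rule tendsto_eventually)
  ultimately show ?thesis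
    by (rule tendsto_unique[rotated]) simp
qed

lemma Hg_d1_signs:
  assumes "Hg g" "0 < a" "a < 1"
  shows "d1 g 0 a < 0" "d1 g a a > 0" "d1 g 1 a < 0"
  using assms unfolding Hg_def by auto

lemma Hg2_eventually_unique_inflection:
  assumes "Hg2 g"
  shows "eventually (\<lambda>a. \<exists>!v. d2 g v a = 0) (at_right 0)"
proof -
  obtain a0 where "a0 > 0" "\<forall>a \<in> {0<..<a0}. \<exists>!v. d2 g v a = 0"
    using assms unfolding Hg2_def by auto
  then show ?thesis
    unfolding eventually_at_right_field by (intro exI[of _ a0]) auto
qed

lemma Hg_Hg2_convex_near_origin:
  assumes "Hg g" "Hg2 g"
  obtains u1 u2 where "0 < u1" "u1 < u2" "u2 \<le> 1" "g u1 0 > 0" "d1 g u1 0 < d1 g u2 0"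
proof -
  have "C2_real (\<lambda>v. g v 0)" "d1 g 0 0 = 0" "d2 g 0 0 > 0"
    using assms(2) unfolding Hg2_def by auto
  note derivs = C2_real_has_derivatives[of g 0, OF \<open>C2_real (\<lambda>v. g v 0)\<close>]
  obtain \<delta> where "\<delta> > 0"
    and mono: "\<And>u v. 0 \<le> u \<Longrightarrow> u < v \<Longrightarrow> v \<le> \<delta> \<Longrightarrow> d1 g u 0 < d1 g v 0"
    and pos: "\<And>u. 0 < u \<Longrightarrow> u \<le> \<delta> \<Longrightarrow> g u 0 > 0"
    using pos_and_strict_mono_deriv_near_flat_zero[OF derivs Hg_zero_at_origin[OF assms(1)]]
      \<open>d1 g 0 0 = 0\<close> \<open>d2 g 0 0 > 0\<close> by blast
  show ?thesis
    using that[of "min \<delta> 1 / 2" "min \<delta> 1"] mono[of "min \<delta> 1 / 2" "min \<delta> 1"]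
      pos[of "min \<delta> 1 / 2"] \<open>\<delta> > 0\<close> by simp
qed

lemma Hg_Hg2_eventually_d2_diag_pos:
  assumes "Hg g" "Hg2 g"
  shows "eventually (\<lambda>a. d2 g a a > 0) (at_right 0)"
proof -
  obtain u1 u2 where u: "0 < u1" "u1 < u2" "d1 g u1 0 < d1 g u2 0"
    using Hg_Hg2_convex_near_origin[OF assms] by blast
  have cont: "continuous_on (UNIV \<times> {0..1}) (\<lambda>q. d1 g (fst q) (snd q))"
    using assms(1) C1_on_strip_imp_continuous_on_d1 unfolding Hg_def by blast
  have "((\<lambda>a. d1 g u2 a - d1 g u1 a) \<longlongrightarrow> d1 g u2 0 - d1 g u1 0) (at_right 0)"
    using tendsto_at_right_0_along_strip[OF cont, of "\<lambda>_. u1"]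
      tendsto_at_right_0_along_strip[OF cont, of "\<lambda>_. u2"] by (simp add: tendsto_diff)
  then have "eventually (\<lambda>a. 0 < d1 g u2 a - d1 g u1 a) (at_right 0)"
    by (rule order_tendstoD(1)) (use u in simp)
  moreover have "eventually (\<lambda>a. a < u1) (at_right 0)"
    using order_tendstoD(2)[OF tendsto_ident_at[of 0 "{0<..}"] u(1)] .
  moreover have "eventually (\<lambda>a. a < 1) (at_right (0::real))"
    using order_tendstoD(2)[OF tendsto_ident_at[of 0 "{0<..}"] zero_less_one] .
  ultimately show ?thesis
    using eventually_at_right_less Hg2_eventually_unique_inflection[OF assms(2)]
  proof eventually_elim
    case (elim a)
    have "C2_real (\<lambda>v. g v a)"
      using assms(2) elim(3,4) unfolding Hg2_def by simp
    note derivs = C2_real_has_derivatives[of g a, OF this]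
    have one_zero: "y = z" if "d2 g y a = 0" "d2 g z a = 0" for y z
      using elim(5) that by blast
    show ?case
      by (rule deriv_pos_if_rise_fall_rise[OF derivs(2,3) one_zero,
            where p=0 and b=1 and q=u1 and r=u2])
        (use elim(1-4) u Hg_d1_signs[OF assms(1) elim(4,3)] in auto)
  qed
qed

lemma Hg_Hg2_eventually_slope_below_SUP:
  assumes "Hg g" "Hg2 g" "k > 0"
  shows "eventually (\<lambda>a. d1 g a a / (k + 1) < (SUP A \<in> {a + 2 * a / k .. 1}. g A a / A))
           (at_right 0)"
proof -
  obtain u1 u2 where u: "0 < u1" "u1 < u2" "u2 \<le> 1" "g u1 0 > 0"
    using Hg_Hg2_convex_near_origin[OF assms(1,2)] by blast
  define c where "c = g u1 0 / (2 * u1)"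
  have "c > 0" using u by (simp add: c_def)
  have cont_g: "continuous_on (UNIV \<times> {0..1}) (\<lambda>q. g (fst q) (snd q))"
    and cont_d1: "continuous_on (UNIV \<times> {0..1}) (\<lambda>q. d1 g (fst q) (snd q))"
    using assms(1) C1_on_strip_imp_continuous_on C1_on_strip_imp_continuous_on_d1
    unfolding Hg_def by blast+
  have "((\<lambda>a. g u1 a) \<longlongrightarrow> g u1 0) (at_right 0)"
    using tendsto_at_right_0_along_strip[OF cont_g, of "\<lambda>_. u1"] by simp
  then have "eventually (\<lambda>a. g u1 0 / 2 < g u1 a) (at_right 0)"
    by (rule order_tendstoD(1)) (use u in simp)
  moreover have "((\<lambda>a. d1 g a a) \<longlongrightarrow> 0) (at_right 0)"
    using tendsto_at_right_0_along_strip[OF cont_d1, of "\<lambda>a. a"] assms(2)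
    unfolding Hg2_def by (simp add: continuous_on_id)
  then have "eventually (\<lambda>a. d1 g a a < (k + 1) * c) (at_right 0)"
    by (rule order_tendstoD(2)) (use \<open>c > 0\<close> \<open>k > 0\<close> in simp)
  moreover have "((\<lambda>a. a + 2 * a / k) \<longlongrightarrow> 0) (at_right 0)"
    using \<open>k > 0\<close> by (auto intro!: tendsto_eq_intros)
  then have "eventually (\<lambda>a. a + 2 * a / k < u1) (at_right 0)"
    by (rule order_tendstoD(2)) (use u in simp)
  moreover have "eventually (\<lambda>a. a < 1) (at_right (0::real))"
    using order_tendstoD(2)[OF tendsto_ident_at[of 0 "{0<..}"] zero_less_one] .
  ultimately show ?thesis
    using eventually_at_right_less
  proof eventually_elim
    case (elim a)
    have "0 < a + 2 * a / k"
      using elim(5) \<open>k > 0\<close> by (intro add_pos_pos divide_pos_pos) auto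
    have "C2_real (\<lambda>v. g v a)"
      using assms(2) elim(4,5) unfolding Hg2_def by simp
    then have "isCont (\<lambda>A. g A a) A" for A
      using C2_real_has_derivatives(1) DERIV_isCont by blast
    then have cont: "continuous_on {a + 2 * a / k .. 1} (\<lambda>A. g A a / A)"
      using \<open>0 < a + 2 * a / k\<close>
      by (intro continuous_on_divide continuous_at_imp_continuous_on continuous_on_id) auto
    have "0 < k + 1" using \<open>k > 0\<close> by simp
    then have "d1 g a a / (k + 1) < c"
      using elim(2) by (simp add: pos_divide_less_eq mult.commute)
    also have "c < g u1 a / u1"
      using elim(1) u(1) by (simp add: c_def field_simps)
    finally have "d1 g a a / (k + 1) < g u1 a / u1" .
    moreover have "u1 \<in> {a + 2 * a / k .. 1}"
      using elim(3) u by simp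
    ultimately show ?case
      using less_SUP_if_continuous_on_compact[OF compact_Icc cont] by blast
  qed
qed

theorem lemma5p5:
  fixes g :: "real \<Rightarrow> real \<Rightarrow> real" and k :: real
  assumes "k > 0" and "Hg g" and "Hg2 g"
  shows "\<exists>\<delta>a \<in> {0<..<1}. \<forall>a \<in> {0<..<\<delta>a}.
           d2 g a a > 0 \<and>
           0 < d1 g a a / (k + 1) \<and>
           d1 g a a / (k + 1) < (SUP A \<in> {a + 2 * a / k .. 1}. g A a / A)"
proof -
  have "eventually (\<lambda>a. 0 < d1 g a a) (at_right 0)"
    unfolding eventually_at_right_field using Hg_d1_signs(2)[OF assms(2)]
    by (intro exI[of _ 1]) auto
  then have "eventually (\<lambda>a. d2 g a a > 0 \<and> 0 < d1 g a a / (k + 1) \<and>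
               d1 g a a / (k + 1) < (SUP A \<in> {a + 2 * a / k .. 1}. g A a / A)) (at_right 0)"
    using Hg_Hg2_eventually_d2_diag_pos[OF assms(2,3)]
      Hg_Hg2_eventually_slope_below_SUP[OF assms(2,3,1)]
    by eventually_elim (use \<open>k > 0\<close> in simp)
  then show ?thesis
    by (rule ex_Ioo_if_eventually_at_right_0)
qed

end
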